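(* Let $(\mathfrak{h},\langle\cdot,\cdot\rangle)$ be a Kundt pair on $\mathfrak{e}_0(2)$. Then it is equivalent to $(\mathfrak{h}_0,\langle\cdot,\cdot\rangle_0)$ where the matrix of $\langle\cdot,\cdot\rangle_0$ in the basis $(X_1,X_2,X_3)$ is $\begin{pmatrix}0&1&0\\1&0&0\\0&0&\mu\end{pmatrix}$ with $\mu>0$, and $\mathfrak{h}_0=\mathrm{span}\{X_2,X_3\}$.
   Context: $\mathfrak{e}_0(2)$ has basis $(X_1,X_2,X_3)$ with only nonzero brackets $[X_1,X_2]=X_3$, $[X_1,X_3]=-X_2$. For a Lorentzian scalar product $\langle\cdot,\cdot\rangle$ on a Lie algebra $\mathfrak{g}$, the Levi-Civita product is defined by $2\langle u\bullet v,w\rangle=\langle[u,v],w\rangle+\langle[w,u],v\rangle+\langle[w,v],u\rangle$. A Kundt pair on $\mathfrak{g}$ is a pair consisting of a Lorentzian scalar product $\langle\cdot,\cdot\rangle$ and a codimension one subalgebra $\mathfrak{h}$ which is $\langle\cdot,\cdot\rangle$-degenerate, stable by $\bullet$, and such that $e\bullet e=0$ for all $e\in\mathfrak{h}^\perp$. Two Kundt pairs $(\mathfrak{h}_1,\langle\cdot,\cdot\rangle_1)$, $(\mathfrak{h}_2,\langle\cdot,\cdot\rangle_2)$ are equivalent if there is a Lie algebra automorphism $\phi$ of $\mathfrak{g}$ with $\phi(\mathfrak{h}_1)=\mathfrak{h}_2$ and $\phi^*\langle\cdot,\cdot\rangle_2=\langle\cdot,\cdot\rangle_1$. *)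

theory Defs
  imports "HOL-Analysis.Analysis"
begin

text \<open>The Lie algebra e_0(2) realised on real^3, with basis X1, X2, X3 the standard basis
  vectors and brackets [X1,X2] = X3, [X1,X3] = -X2, [X2,X3] = 0 (extended bilinearly).\<close>

definition X1 :: "real^3" where "X1 = vector [1, 0, 0]"
definition X2 :: "real^3" where "X2 = vector [0, 1, 0]"
definition X3 :: "real^3" where "X3 = vector [0, 0, 1]"

definition e02_bracket :: "real^3 \<Rightarrow> real^3 \<Rightarrow> real^3" where
  "e02_bracket u v =
     (u$1 * v$2 - u$2 * v$1) *\<^sub>R X3 - (u$1 * v$3 - u$3 * v$1) *\<^sub>R X2"

definition scalar_product :: "(real^3 \<Rightarrow> real^3 \<Rightarrow> real) \<Rightarrow> bool" where
  "scalar_product g \<longleftrightarrow> bilinear g \<and> (\<forall>u v. g u v = g v u)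
     \<and> (\<forall>u. (\<forall>v. g u v = 0) \<longrightarrow> u = 0)"

definition lorentzian :: "(real^3 \<Rightarrow> real^3 \<Rightarrow> real) \<Rightarrow> bool" where
  "lorentzian g \<longleftrightarrow> scalar_product g \<and>
     (\<exists>e1 e2 e3. independent {e1, e2, e3} \<and> e1 \<noteq> e2 \<and> e1 \<noteq> e3 \<and> e2 \<noteq> e3 \<and>
        g e1 e1 = -1 \<and> g e2 e2 = 1 \<and> g e3 e3 = 1 \<and>
        g e1 e2 = 0 \<and> g e1 e3 = 0 \<and> g e2 e3 = 0)"

definition levi_civita :: "(real^3 \<Rightarrow> real^3 \<Rightarrow> real) \<Rightarrow> real^3 \<Rightarrow> real^3 \<Rightarrow> real^3" where
  "levi_civita g u v = (THE x. \<forall>w. 2 * g x w =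
      g (e02_bracket u v) w + g (e02_bracket w u) v + g (e02_bracket w v) u)"

definition orth_compl :: "(real^3 \<Rightarrow> real^3 \<Rightarrow> real) \<Rightarrow> (real^3) set \<Rightarrow> (real^3) set" where
  "orth_compl g h = {e. \<forall>u\<in>h. g e u = 0}"

definition subalgebra :: "(real^3) set \<Rightarrow> bool" where
  "subalgebra h \<longleftrightarrow> subspace h \<and> (\<forall>u\<in>h. \<forall>v\<in>h. e02_bracket u v \<in> h)"

definition kundt_pair :: "(real^3) set \<Rightarrow> (real^3 \<Rightarrow> real^3 \<Rightarrow> real) \<Rightarrow> bool" where
  "kundt_pair h g \<longleftrightarrow> lorentzian g \<and> subalgebra h \<and> dim h = 2 \<and>
     (\<exists>u\<in>h. u \<noteq> 0 \<and> (\<forall>v\<in>h. g u v = 0)) \<and>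
     (\<forall>u\<in>h. \<forall>v\<in>h. levi_civita g u v \<in> h) \<and>
     (\<forall>e\<in>orth_compl g h. levi_civita g e e = 0)"

definition e02_automorphism :: "(real^3 \<Rightarrow> real^3) \<Rightarrow> bool" where
  "e02_automorphism \<phi> \<longleftrightarrow> linear \<phi> \<and> bij \<phi> \<and>
     (\<forall>u v. \<phi> (e02_bracket u v) = e02_bracket (\<phi> u) (\<phi> v))"

definition kundt_equivalent ::
  "(real^3) set \<Rightarrow> (real^3 \<Rightarrow> real^3 \<Rightarrow> real) \<Rightarrow> (real^3) set \<Rightarrow> (real^3 \<Rightarrow> real^3 \<Rightarrow> real) \<Rightarrow> bool" where
  "kundt_equivalent h1 g1 h2 g2 \<longleftrightarrow> (\<exists>\<phi>. e02_automorphism \<phi> \<and> \<phi> ` h1 = h2 \<and>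
      (\<forall>u v. g2 (\<phi> u) (\<phi> v) = g1 u v))"

definition g0 :: "real \<Rightarrow> real^3 \<Rightarrow> real^3 \<Rightarrow> real" where
  "g0 \<mu> u v = u$1 * v$2 + u$2 * v$1 + \<mu> * (u$3 * v$3)"

definition h0 :: "(real^3) set" where "h0 = span {X2, X3}"

end

theory Submission
  imports Defs
begin

text \<open>Every two-dimensional subalgebra of \<open>e\<^sub>0(2)\<close> is the abelian ideal
  \<open>h0 = span {X2, X3}\<close>, on which \<open>ad X1\<close> acts as a rotation by a right angle. A degenerate
  \<open>h0\<close> contains a null vector \<open>n\<close> orthogonal to \<open>h0\<close>, which we normalise by \<open>g n X1 = 1\<close>.
  Then \<open>[X1, n]\<close> is orthogonal to \<open>n\<close>, hence not timelike by the Lorentzian signature, and not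
  null either: it would then be orthogonal to \<open>h0\<close> like \<open>n\<close>, hence proportional to \<open>n\<close> by
  nondegeneracy, while \<open>ad X1\<close> has no real eigenvector. Adding to \<open>X1\<close> a suitable combination of \<open>n\<close> and \<open>[X1, n]\<close> yields a null
  vector \<open>p\<close> orthogonal to \<open>[X1, n]\<close>, and the map \<open>X1, X2, X3 \<mapsto> p, n, [X1, n]\<close> is an
  automorphism pulling \<open>g\<close> back to \<open>g0 \<mu>\<close> with \<open>\<mu> = g [X1, n] [X1, n]\<close>.\<close>

lemma vec3_eq_iff: "(x::real^3) = y \<longleftrightarrow> x$1 = y$1 \<and> x$2 = y$2 \<and> x$3 = y$3"
  by (simp add: vec_eq_iff forall_3)

lemma X_nth [simp]:
  "X1$1 = 1" "X1$2 = 0" "X1$3 = 0" "X2$1 = 0" "X2$2 = 1" "X2$3 = 0"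
  "X3$1 = 0" "X3$2 = 0" "X3$3 = 1"
  by (simp_all add: X1_def X2_def X3_def)

lemma e02_bracket_nth [simp]:
  "e02_bracket u v $ 1 = 0"
  "e02_bracket u v $ 2 = u$3 * v$1 - u$1 * v$3"
  "e02_bracket u v $ 3 = u$1 * v$2 - u$2 * v$1"
  by (simp_all add: e02_bracket_def)

lemma bilinear_simps:
  assumes "bilinear g"
  shows "g (x + y) z = g x z + g y z" "g x (y + z) = g x y + g x z"
    "g (c *\<^sub>R x) z = c * g x z" "g x (c *\<^sub>R z) = c * g x z"
    "g (x - y) z = g x z - g y z" "g x (y - z) = g x y - g x z"
    "g 0 z = 0" "g x 0 = 0"
  using assms
  by (simp_all add: bilinear_ladd bilinear_radd bilinear_lmul bilinear_rmul
      bilinear_lsub bilinear_rsub bilinear_lzero bilinear_rzero)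

lemma h0_eq: "h0 = {x. x$1 = 0}"
proof
  have "subspace {x::real^3. x$1 = 0}" by (auto simp: subspace_def)
  then show "h0 \<subseteq> {x. x$1 = 0}" unfolding h0_def by (intro span_minimal) auto
  show "{x. x$1 = 0} \<subseteq> h0"
  proof
    fix s :: "real^3" assume "s \<in> {x. x$1 = 0}"
    then have "s = s$2 *\<^sub>R X2 + s$3 *\<^sub>R X3" by (simp add: vec3_eq_iff)
    also have "\<dots> \<in> h0" unfolding h0_def by (intro span_add span_scale span_base) auto
    finally show "s \<in> h0" .
  qed
qed

lemma e02_bracket_h0_right: "w \<in> h0 \<Longrightarrow> e02_bracket x w = x$1 *\<^sub>R e02_bracket X1 w"
  by (simp add: h0_eq vec3_eq_iff)

lemma bracket_X1_eigenvector_h0: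
  assumes "w \<in> h0" "e02_bracket X1 w = c *\<^sub>R w"
  shows "w = 0"
proof -
  have w1: "w$1 = 0" using assms(1) by (simp add: h0_eq)
  have A: "c * w$2 = - w$3" and B: "w$2 - c * w$3 = 0"
    using assms(2) by (simp_all add: vec3_eq_iff)
  have "w$2 * (1 + c^2) = w$2 + c * (c * w$2)" by (simp add: algebra_simps power2_eq_square)
  also have "\<dots> = w$2 - c * w$3" by (simp only: A)
  also have "\<dots> = 0" by (rule B)
  finally have "w$2 * (1 + c^2) = 0" .
  moreover have "1 + c^2 \<noteq> 0" by (smt (verit) zero_le_power2)
  ultimately have "w$2 = 0" by simp
  with A B w1 show "w = 0" by (simp add: vec3_eq_iff)
qed

lemma h0_decompose_bracket_X1:
  assumes "v \<in> h0" "w \<in> h0" "w \<noteq> 0"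
  shows "\<exists>a b. v = a *\<^sub>R w + b *\<^sub>R e02_bracket X1 w"
proof -
  define N where "N = (w$2)^2 + (w$3)^2"
  have v1: "v$1 = 0" and w1: "w$1 = 0" using assms(1,2) by (simp_all add: h0_eq)
  then have N: "N \<noteq> 0" using assms(3) by (auto simp: N_def vec3_eq_iff sum_power2_eq_zero_iff)
  define a where "a = (v$2 * w$2 + v$3 * w$3) / N"
  define b where "b = (v$3 * w$2 - v$2 * w$3) / N"
  have "a * w$2 - b * w$3 = v$2" "a * w$3 + b * w$2 = v$3"
    using N unfolding a_def b_def
    by (simp_all add: field_simps) (simp_all add: N_def algebra_simps power2_eq_square)
  then have "v = a *\<^sub>R w + b *\<^sub>R e02_bracket X1 w"
    using v1 w1 N by (simp add: vec3_eq_iff)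
  then show ?thesis by blast
qed

lemma subalgebra_dim2_eq_h0:
  assumes "subalgebra h" "dim h = 2"
  shows "h = h0"
proof -
  have sub: "subspace h" and br: "\<And>u v. u \<in> h \<Longrightarrow> v \<in> h \<Longrightarrow> e02_bracket u v \<in> h"
    using assms(1) by (auto simp: subalgebra_def)
  have "h \<subseteq> h0"
  proof
    fix x assume x: "x \<in> h"
    show "x \<in> h0"
    proof (rule ccontr)
      assume "x \<notin> h0"
      then have x1: "x$1 \<noteq> 0" by (simp add: h0_eq)
      have "\<not> h \<subseteq> span {x}"
        using dim_le_card[of h "{x}"] assms(2) by auto
      then obtain v where v: "v \<in> h" "v \<notin> span {x}" by blast
      define w where "w = v - (v$1 / x$1) *\<^sub>R x"
      have wh: "w \<in> h" using sub v x by (simp add: w_def subspace_diff subspace_mul)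
      have wh0: "w \<in> h0" using x1 by (simp add: w_def h0_eq)
      have "w \<noteq> 0" using v(2) by (auto simp: w_def span_singleton)
      have "e02_bracket X1 w = (1 / x$1) *\<^sub>R e02_bracket x w"
        using x1 by (simp add: e02_bracket_h0_right[OF wh0, of x])
      then have Jw: "e02_bracket X1 w \<in> h" using br[OF x wh] sub by (simp add: subspace_mul)
      have h0h: "h0 \<subseteq> h"
      proof
        fix u assume "u \<in> h0"
        then obtain a b where "u = a *\<^sub>R w + b *\<^sub>R e02_bracket X1 w"
          using h0_decompose_bracket_X1[OF _ wh0 \<open>w \<noteq> 0\<close>] by blast
        then show "u \<in> h"
          using sub wh \<open>e02_bracket X1 w \<in> h\<close> by (simp add: subspace_add subspace_mul)
      qed
      have "y \<in> h" for y
      proof -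
        have "y - (y$1 / x$1) *\<^sub>R x \<in> h0" using x1 by (simp add: h0_eq)
        then have "(y$1 / x$1) *\<^sub>R x + (y - (y$1 / x$1) *\<^sub>R x) \<in> h"
          using h0h sub x by (blast intro: subspace_add subspace_mul)
        then show ?thesis by simp
      qed
      then have "h = UNIV" by blast
      then have "dim h = 3" by (simp add: dim_UNIV)
      with assms(2) show False by simp
    qed
  qed
  moreover have "dim h0 \<le> card {X2, X3}" by (rule dim_le_card) (auto simp: h0_def)
  then have "dim h0 \<le> 2" by (simp add: card_insert_if split: if_splits)
  ultimately show ?thesis
    using subspace_dim_equal[OF sub subspace_span] assms(2) by (simp add: h0_def)
qed

lemma scalar_productD:
  assumes "scalar_product g"
  shows "bilinear g" "g u v = g v u"
  using assms by (auto simp: scalar_product_def)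

lemma scalar_product_eq_0_basis:
  assumes "scalar_product g" "g w X1 = 0" "g w X2 = 0" "g w X3 = 0"
  shows "w = 0"
proof -
  have "g w v = 0" for v
  proof -
    have "v = v$1 *\<^sub>R X1 + v$2 *\<^sub>R X2 + v$3 *\<^sub>R X3" by (simp add: vec3_eq_iff)
    then have "g w v = g w (v$1 *\<^sub>R X1 + v$2 *\<^sub>R X2 + v$3 *\<^sub>R X3)" by simp
    then show ?thesis using assms by (simp add: bilinear_simps[OF scalar_productD(1)[OF assms(1)]])
  qed
  then show ?thesis using assms(1) by (simp add: scalar_product_def)
qed

lemma orthogonal_h0_X1_ne_0:
  assumes "scalar_product g" "n \<noteq> 0" "\<And>v. v \<in> h0 \<Longrightarrow> g n v = 0"
  shows "g n X1 \<noteq> 0"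
  using scalar_product_eq_0_basis[OF assms(1)] assms(2,3) by (auto simp: h0_eq)

lemma minkowski_null_not_orthogonal_timelike:
  fixes c1 c2 c3 d1 d2 d3 :: real
  assumes "c2^2 + c3^2 = c1^2" "(c1, c2, c3) \<noteq> (0, 0, 0)" "d2^2 + d3^2 < d1^2"
  shows "c2 * d2 + c3 * d3 \<noteq> c1 * d1"
proof
  assume orth: "c2 * d2 + c3 * d3 = c1 * d1"
  have c1: "c1 \<noteq> 0" using assms(1,2) by (auto simp: sum_power2_eq_zero_iff)
  have "(c1 * d1)^2 = (c2 * d2 + c3 * d3)^2" using orth by simp
  also have "\<dots> \<le> (c2^2 + c3^2) * (d2^2 + d3^2)"
    using zero_le_power2[of "c2 * d3 - c3 * d2"] by (simp add: algebra_simps power2_eq_square)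
  also have "\<dots> = c1^2 * (d2^2 + d3^2)" using assms(1) by simp
  also have "\<dots> < c1^2 * d1^2" using assms(3) c1 by (intro mult_strict_left_mono) auto
  finally show False by (simp add: power_mult_distrib)
qed

lemma span_3_lincomb:
  assumes "v \<in> span {a, b, c}"
  shows "\<exists>k1 k2 k3. v = k1 *\<^sub>R a + k2 *\<^sub>R b + k3 *\<^sub>R c"
proof -
  from assms obtain k1 where "v - k1 *\<^sub>R a \<in> span {b, c}" by (auto simp: span_insert)
  then obtain k2 where "v - k1 *\<^sub>R a - k2 *\<^sub>R b \<in> span {c}" by (auto simp: span_insert)
  then obtain k3 where "v - k1 *\<^sub>R a - k2 *\<^sub>R b = k3 *\<^sub>R c" by (auto simp: span_singleton)
  then have "v = k1 *\<^sub>R a + k2 *\<^sub>R b + k3 *\<^sub>R c" by (simp add: algebra_simps)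
  then show ?thesis by blast
qed

lemma lorentzian_orthogonal_null_not_timelike:
  assumes "lorentzian g" "g x x = 0" "x \<noteq> 0" "g x y = 0"
  shows "g y y \<ge> 0"
proof (rule ccontr)
  assume timelike: "\<not> g y y \<ge> 0"
  from assms(1) obtain e1 e2 e3 where ind: "independent {e1, e2, e3}"
    and ne: "e1 \<noteq> e2" "e1 \<noteq> e3" "e2 \<noteq> e3"
    and e: "g e1 e1 = -1" "g e2 e2 = 1" "g e3 e3 = 1" "g e1 e2 = 0" "g e1 e3 = 0" "g e2 e3 = 0"
    and sp: "scalar_product g"
    unfolding lorentzian_def by blast
  have e': "g e2 e1 = 0" "g e3 e1 = 0" "g e3 e2 = 0" using e scalar_productD(2)[OF sp] by metis+
  note b = bilinear_simps[OF scalar_productD(1)[OF sp]]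
  have "UNIV \<subseteq> span {e1, e2, e3}"
    using ne by (intro card_ge_dim_independent[OF _ ind]) (auto simp: dim_UNIV)
  then obtain c1 c2 c3 d1 d2 d3 where x: "x = c1 *\<^sub>R e1 + c2 *\<^sub>R e2 + c3 *\<^sub>R e3"
    and y: "y = d1 *\<^sub>R e1 + d2 *\<^sub>R e2 + d3 *\<^sub>R e3"
    using span_3_lincomb by (meson UNIV_I subsetD)
  have "g x x = c2^2 + c3^2 - c1^2" unfolding x by (simp add: b e e' power2_eq_square)
  then have "c2^2 + c3^2 = c1^2" using assms(2) by simp
  moreover have "(c1, c2, c3) \<noteq> (0, 0, 0)" using assms(3) x by auto
  moreover have "g y y = d2^2 + d3^2 - d1^2" unfolding y by (simp add: b e e' power2_eq_square)
  then have "d2^2 + d3^2 < d1^2" using timelike by simp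
  moreover have "g x y = c2 * d2 + c3 * d3 - c1 * d1" unfolding x y by (simp add: b e e')
  then have "c2 * d2 + c3 * d3 = c1 * d1" using assms(4) by simp
  ultimately show False using minkowski_null_not_orthogonal_timelike by blast
qed

lemma bracket_X1_spacelike:
  assumes "lorentzian g" "n \<in> h0" "n \<noteq> 0" "\<And>v. v \<in> h0 \<Longrightarrow> g n v = 0"
  shows "g (e02_bracket X1 n) (e02_bracket X1 n) > 0"
proof -
  define q where "q = e02_bracket X1 n"
  have sp: "scalar_product g" using assms(1) by (simp add: lorentzian_def)
  note b = bilinear_simps[OF scalar_productD(1)[OF sp]]
  have q: "q \<in> h0" by (simp add: q_def h0_eq)
  have gnq: "g n q = 0" "g q n = 0" using assms(4)[OF q] scalar_productD(2)[OF sp] by metis+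
  have "g q q \<ge> 0"
    using lorentzian_orthogonal_null_not_timelike[OF assms(1) assms(4)[OF assms(2)] assms(3) gnq(1)] .
  moreover have "g q q \<noteq> 0"
  proof
    assume qq: "g q q = 0"
    have q_orth: "g q v = 0" if v: "v \<in> h0" for v
    proof -
      obtain a c where "v = a *\<^sub>R n + c *\<^sub>R q"
        using h0_decompose_bracket_X1[OF v assms(2,3)] q_def by blast
      then show ?thesis using gnq qq by (simp add: b)
    qed
    define c where "c = g q X1 / g n X1"
    have "g n X1 \<noteq> 0" using orthogonal_h0_X1_ne_0[OF sp assms(3,4)] .
    then have "q - c *\<^sub>R n = 0"
      using assms(4) q_orth by (intro scalar_product_eq_0_basis[OF sp]) (simp_all add: b c_def h0_eq)
    then have "e02_bracket X1 n = c *\<^sub>R n" by (simp add: q_def)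
    then show False using bracket_X1_eigenvector_h0 assms(2,3) by blast
  qed
  ultimately show ?thesis by (simp add: q_def)
qed

definition frame_map :: "real^3 \<Rightarrow> real^3 \<Rightarrow> real^3 \<Rightarrow> real^3" where
  "frame_map p n x = x$1 *\<^sub>R p + x$2 *\<^sub>R n + x$3 *\<^sub>R e02_bracket X1 n"

lemma linear_frame_map: "linear (frame_map p n)"
  by (rule linearI) (simp_all add: frame_map_def algebra_simps)

lemma frame_map_nth_1: "p$1 = 1 \<Longrightarrow> n \<in> h0 \<Longrightarrow> frame_map p n x $ 1 = x$1"
  by (simp add: frame_map_def h0_eq)

lemma frame_map_bracket:
  assumes "p$1 = 1" "n \<in> h0"
  shows "frame_map p n (e02_bracket x y) = e02_bracket (frame_map p n x) (frame_map p n y)"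
  using assms by (simp add: frame_map_def h0_eq vec3_eq_iff algebra_simps)

lemma frame_map_pullback:
  assumes "bilinear g" "\<And>u v. g u v = g v u"
    and "g p p = 0" "g p n = 1" "g p (e02_bracket X1 n) = 0"
    and "g n n = 0" "g n (e02_bracket X1 n) = 0"
  shows "g (frame_map p n x) (frame_map p n y) = g0 (g (e02_bracket X1 n) (e02_bracket X1 n)) x y"
proof -
  have "g n p = 1" "g (e02_bracket X1 n) p = 0" "g (e02_bracket X1 n) n = 0"
    using assms(2-7) by metis+
  then show ?thesis
    using assms(3-7) by (simp add: frame_map_def g0_def bilinear_simps[OF assms(1)] algebra_simps)
qed

lemma g0_eq_0_imp_eq_0:
  assumes "\<mu> \<noteq> 0" "\<And>y. g0 \<mu> x y = 0"
  shows "x = 0"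
  using assms(1) assms(2)[of X1] assms(2)[of X2] assms(2)[of X3] by (simp add: g0_def vec3_eq_iff)

lemma inj_if_pullback_g0:
  assumes "linear f" "bilinear g" "\<mu> \<noteq> 0" "\<And>x y. g (f x) (f y) = g0 \<mu> x y"
  shows "inj f"
  unfolding linear_injective_0[OF assms(1)]
  using assms(2-4) g0_eq_0_imp_eq_0 by (metis bilinear_simps(7))

lemma e02_automorphism_frame_map:
  assumes "p$1 = 1" "n \<in> h0" "inj (frame_map p n)"
  shows "e02_automorphism (frame_map p n)"
  using assms linear_frame_map linear_inj_imp_surj[OF linear_frame_map assms(3)] frame_map_bracket
  by (simp add: e02_automorphism_def bij_def)

lemma frame_map_image_h0:
  assumes "p$1 = 1" "n \<in> h0" "surj (frame_map p n)"
  shows "frame_map p n ` h0 = h0"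
proof
  show "frame_map p n ` h0 \<subseteq> h0" using assms by (auto simp: h0_eq frame_map_nth_1)
  show "h0 \<subseteq> frame_map p n ` h0"
  proof
    fix y assume "y \<in> h0"
    moreover obtain x where "y = frame_map p n x" using assms(3) by auto
    ultimately show "y \<in> frame_map p n ` h0" using assms(1,2) by (simp add: h0_eq frame_map_nth_1)
  qed
qed

lemma h0_null_normal_frame:
  assumes "lorentzian g" "n \<in> h0" "n \<noteq> 0" "\<And>v. v \<in> h0 \<Longrightarrow> g n v = 0"
  shows "\<exists>p m \<mu>. \<mu> > 0 \<and> p$1 = 1 \<and> m \<in> h0 \<and>
    (\<forall>x y. g (frame_map p m x) (frame_map p m y) = g0 \<mu> x y)"
proof -
  have sp: "scalar_product g" using assms(1) by (simp add: lorentzian_def)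
  note b = bilinear_simps[OF scalar_productD(1)[OF sp]] and sym = scalar_productD(2)[OF sp]
  define m where "m = (1 / g n X1) *\<^sub>R n"
  have k: "g n X1 \<noteq> 0" using orthogonal_h0_X1_ne_0[OF sp assms(3,4)] .
  have m: "m \<in> h0" "m \<noteq> 0" "\<And>v. v \<in> h0 \<Longrightarrow> g m v = 0"
    using assms(2-4) k by (simp_all add: m_def h0_eq b)
  have gmX1: "g X1 m = 1" using k sym by (simp add: m_def b)
  define q where "q = e02_bracket X1 m"
  have "q \<in> h0" by (simp add: q_def h0_eq)
  then have gm: "g m m = 0" "g m q = 0" "g q m = 0" using m(1,3) sym by metis+
  define \<mu> where "\<mu> = g q q"
  have \<mu>: "\<mu> > 0" using bracket_X1_spacelike[OF assms(1) m] by (simp add: \<mu>_def q_def)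
  \<comment> \<open>\<open>\<beta>\<close> makes \<open>p\<close> orthogonal to \<open>q\<close>, then \<open>\<alpha>\<close> makes it null\<close>
  define \<beta> where "\<beta> = - g X1 q / \<mu>"
  define \<alpha> where "\<alpha> = - (g X1 X1 + 2 * \<beta> * g X1 q + \<beta>^2 * \<mu>) / 2"
  define p where "p = X1 + \<alpha> *\<^sub>R m + \<beta> *\<^sub>R q"
  have "g p m = 1" "g p q = 0" "g p p = 0"
    using gmX1 gm \<mu> sym[of q X1] sym[of m X1]
    by (simp_all add: p_def b \<mu>_def[symmetric] \<beta>_def \<alpha>_def algebra_simps power2_eq_square)
  moreover have "p$1 = 1" using m(1) by (simp add: p_def q_def h0_eq)
  ultimately show ?thesis
    using frame_map_pullback[OF scalar_productD(1)[OF sp] sym] gm \<mu> m(1)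
    by (metis q_def \<mu>_def)
qed

lemma e02_automorphism_inv:
  assumes "e02_automorphism \<phi>"
  shows "e02_automorphism (inv \<phi>)"
proof -
  have lin: "linear \<phi>" and bij: "bij \<phi>"
    and br: "\<And>u v. \<phi> (e02_bracket u v) = e02_bracket (\<phi> u) (\<phi> v)"
    using assms by (auto simp: e02_automorphism_def)
  have "inv \<phi> (e02_bracket u v) = e02_bracket (inv \<phi> u) (inv \<phi> v)" for u v
    using br[of "inv \<phi> u" "inv \<phi> v"] bij by (metis bij_inv_eq_iff)
  then show ?thesis
    using inj_linear_imp_inv_linear[OF lin bij_is_inj[OF bij]] bij_imp_bij_inv[OF bij]
    by (simp add: e02_automorphism_def)
qed

lemma kundt_equivalent_sym:
  assumes "kundt_equivalent h1 g1 h2 g2"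
  shows "kundt_equivalent h2 g2 h1 g1"
proof -
  obtain \<phi> where aut: "e02_automorphism \<phi>" and img: "\<phi> ` h1 = h2"
    and iso: "\<And>u v. g2 (\<phi> u) (\<phi> v) = g1 u v"
    using assms by (auto simp: kundt_equivalent_def)
  have bij: "bij \<phi>" using aut by (simp add: e02_automorphism_def)
  have "inv \<phi> ` h2 = h1" using img bij by (metis bij_is_inj image_inv_f_f)
  moreover have "g1 (inv \<phi> u) (inv \<phi> v) = g2 u v" for u v
    using iso[of "inv \<phi> u" "inv \<phi> v"] bij by (simp add: bij_is_surj surj_f_inv_f)
  ultimately show ?thesis
    using e02_automorphism_inv[OF aut] by (auto simp: kundt_equivalent_def)
qed

theorem theorem5p5:
  fixes h :: "(real^3) set" and g :: "real^3 \<Rightarrow> real^3 \<Rightarrow> real"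
  assumes "kundt_pair h g"
  shows "\<exists>\<mu>>0. kundt_equivalent h g h0 (g0 \<mu>)"
proof -
  have lor: "lorentzian g" and "h = h0"
    using assms subalgebra_dim2_eq_h0 by (auto simp: kundt_pair_def)
  then obtain n where n: "n \<in> h0" "n \<noteq> 0" "\<And>v. v \<in> h0 \<Longrightarrow> g n v = 0"
    using assms by (auto simp: kundt_pair_def)
  obtain p m \<mu> where \<mu>: "\<mu> > 0" and p: "p$1 = 1" and m: "m \<in> h0"
    and pullback: "\<And>x y. g (frame_map p m x) (frame_map p m y) = g0 \<mu> x y"
    using h0_null_normal_frame[OF lor n] by blast
  have "inj (frame_map p m)"
    using inj_if_pullback_g0[OF linear_frame_map _ _ pullback] lor \<mu>
    by (simp add: lorentzian_def scalar_product_def)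
  then have "e02_automorphism (frame_map p m)" "frame_map p m ` h0 = h0"
    using e02_automorphism_frame_map frame_map_image_h0 p m
    by (auto simp: e02_automorphism_def bij_def)
  then have "kundt_equivalent h0 (g0 \<mu>) h g"
    unfolding kundt_equivalent_def \<open>h = h0\<close> using pullback by blast
  then show ?thesis using \<mu> kundt_equivalent_sym by blast
qed

end
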